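(* For the gossip USD and every $t\ge1$: (1) $\mathbb E_{t-1}[\psi_t]\le\frac{\beta_{t-1}}{n}$. (2) Conditioned on $\mathcal F_{t-1}$, $\psi_t-\mathbb E_{t-1}[\psi_t]$ satisfies the $\big(\frac{24}{n},\frac{400\beta_{t-1}}{n}\big)$-Bernstein condition.
   Context: Vertex set $V$, $|V|=n$; opinions in $\Sigma=[k]\cup\{\bot\}$ ($\bot$ = undecided). USD update rule: $\mathsf{update}(\sigma_1,\sigma_2)=\bot$ if $\sigma_1,\sigma_2\in[k]$ and $\sigma_1\ne\sigma_2$; $=\sigma_2$ if $\sigma_1=\bot$; $=\sigma_1$ otherwise. Gossip USD: given $\mathrm{opn}_t\in\Sigma^V$, every $u\in V$ independently picks $v$ uniformly from $V$ and sets $\mathrm{opn}_{t+1}(u)=\mathsf{update}(\mathrm{opn}_t(u),\mathrm{opn}_t(v))$. Notation: $\alpha_t(i)=|\{u:\mathrm{opn}_t(u)=i\}|/n$, $\beta_t=\sum_{i\in[k]}\alpha_t(i)$, $\gamma_t=\sum_{i\in[k]}\alpha_t(i)^2$, $\psi_t=\beta_t(2\beta_t-1)-\gamma_t$. $(\mathcal F_t)$ is the natural filtration; $\mathbb E_{t-1}$ is conditional expectation given $\mathcal F_{t-1}$. Bernstein condition: for $D,s\ge0$, $X$ satisfies the $(D,s)$-Bernstein condition if $\mathbb E[e^{\lambda X}]\le\exp\!\big(\frac{\lambda^2 s/2}{1-|\lambda|D/3}\big)$ for all real $\lambda$ with $|\lambda|D<3$. Conditioned on $\mathcal F_{t-1}$: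 the same with $\mathbb E_{t-1}$, almost surely. *)

theory Defs
  imports "HOL-Probability.Probability"
begin

text \<open>Opinions: None is the undecided opinion, Some i with i in {1..k} is opinion i.\<close>

definition opinions :: "nat \<Rightarrow> nat option set" where
  "opinions k = insert None (Some ` {1..k})"

fun usd_update :: "nat option \<Rightarrow> nat option \<Rightarrow> nat option" where
  "usd_update (Some a) (Some b) = (if a \<noteq> b then None else Some a)"
| "usd_update None s = s"
| "usd_update (Some a) None = Some a"

definition gossip_step :: "('v::finite \<Rightarrow> nat option) \<Rightarrow> ('v \<Rightarrow> nat option) pmf" where
  "gossip_step opn =
     Pi_pmf UNIV undefined
       (\<lambda>u. map_pmf (\<lambda>v. usd_update (opn u) (opn v)) (pmf_of_set (UNIV :: 'v set)))"

definition alpha :: "('v::finite \<Rightarrow> nat option) \<Rightarrow> nat \<Rightarrow> real" where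
  "alpha opn i = real (card {u. opn u = Some i}) / real CARD('v)"

definition beta :: "nat \<Rightarrow> ('v::finite \<Rightarrow> nat option) \<Rightarrow> real" where
  "beta k opn = (\<Sum>i\<in>{1..k}. alpha opn i)"

definition gamma :: "nat \<Rightarrow> ('v::finite \<Rightarrow> nat option) \<Rightarrow> real" where
  "gamma k opn = (\<Sum>i\<in>{1..k}. (alpha opn i)^2)"

definition psi :: "nat \<Rightarrow> ('v::finite \<Rightarrow> nat option) \<Rightarrow> real" where
  "psi k opn = beta k opn * (2 * beta k opn - 1) - gamma k opn"

definition bernstein_cond :: "'a pmf \<Rightarrow> ('a \<Rightarrow> real) \<Rightarrow> real \<Rightarrow> real \<Rightarrow> bool" where
  "bernstein_cond M X D s \<longleftrightarrow>
     (\<forall>l::real. \<bar>l\<bar> * D < 3 \<longrightarrow>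
        measure_pmf.expectation M (\<lambda>x. exp (l * X x))
          \<le> exp ((l^2 * s / 2) / (1 - \<bar>l\<bar> * D / 3)))"

end

theory Submission
  imports Defs
begin

(* With e(s) the indicator vector of opinion s and Q(a, b) = 2 (sum a) (sum b) - sum a - <a, b>
   on R^k, psi = Q(alpha, alpha) is the average of Q(e(x u), e(x w)) over ordered pairs of vertices.
   After one round the opinions of the vertices are independent and Q vanishes on the diagonal, so
   E psi = Q(mbar, mbar) - n^-2 sum_u Q(m u, m u), where m u is the expected indicator vector of u
   and mbar the average of the m u. Here mbar_i = alpha_i (alpha_i + 2 (1 - beta)), for which
   Q(mbar, mbar) <= 0 follows from Cauchy-Schwarz inequalities between power sums, and each
   -Q(m u, m u) is at most beta.

   For the concentration, changing the opinion of one vertex moves psi by at most 4/n, and a vertex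
   changes its opinion only if it samples a decided vertex, which has probability at most beta.
   Revealing the new opinions one vertex at a time, each vertex contributes a factor
   exp(l^2 (4/n)^2 beta exp(8 |l| / n) / 2) to the moment generating function, and the product
   over the n vertices is dominated by the Bernstein bound. *)

section \<open>Expectations over finite distributions\<close>

lemma expectation_pair_pmf_finite:
  fixes h :: "'a \<times> 'b \<Rightarrow> real"
  assumes A: "finite (set_pmf A)" and B: "finite (set_pmf B)"
  shows "measure_pmf.expectation (pair_pmf A B) h =
         measure_pmf.expectation B (\<lambda>b. measure_pmf.expectation A (\<lambda>a. h (a, b)))"
proof -
  have "measure_pmf.expectation (pair_pmf A B) h =
        (\<Sum>x\<in>set_pmf A \<times> set_pmf B. pmf (pair_pmf A B) x * h x)"
    using A B by (subst integral_measure_pmf[of "set_pmf A \<times> set_pmf B"]) auto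
  also have "\<dots> = (\<Sum>a\<in>set_pmf A. \<Sum>b\<in>set_pmf B. pmf A a * pmf B b * h (a, b))"
    by (simp add: sum.cartesian_product case_prod_unfold flip: pmf_pair)
  also have "\<dots> = (\<Sum>b\<in>set_pmf B. pmf B b * (\<Sum>a\<in>set_pmf A. pmf A a * h (a, b)))"
    by (subst sum.swap) (simp add: sum_distrib_left mult_ac)
  also have "\<dots> = measure_pmf.expectation B (\<lambda>b. measure_pmf.expectation A (\<lambda>a. h (a, b)))"
    using A B by (simp add: integral_measure_pmf[of "set_pmf A"] integral_measure_pmf[of "set_pmf B"])
  finally show ?thesis .
qed

lemma finite_set_Pi_pmf:
  assumes "finite A" "\<And>a. a \<in> A \<Longrightarrow> finite (set_pmf (p a))"
  shows "finite (set_pmf (Pi_pmf A dflt p))"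
  using assms by (auto simp: set_Pi_pmf)

lemma expectation_Pi_pmf_insert:
  fixes H :: "('a \<Rightarrow> 'b) \<Rightarrow> real"
  assumes "finite A" "a \<notin> A" "\<And>b. b \<in> insert a A \<Longrightarrow> finite (set_pmf (p b))"
  shows "measure_pmf.expectation (Pi_pmf (insert a A) dflt p) H =
     measure_pmf.expectation (Pi_pmf A dflt p)
       (\<lambda>f. measure_pmf.expectation (p a) (\<lambda>y. H (f(a := y))))"
  using assms
  by (simp add: Pi_pmf_insert expectation_pair_pmf_finite finite_set_Pi_pmf case_prod_unfold)

lemma Pi_pmf_pair_components:
  assumes "finite A" "u \<in> A" "w \<in> A" "u \<noteq> w"
  shows "map_pmf (\<lambda>f. (f u, f w)) (Pi_pmf A dflt p) = pair_pmf (p u) (p w)"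
proof -
  have A: "A = insert u (A - {u})" using assms by auto
  have "map_pmf (\<lambda>f. (f u, f w)) (Pi_pmf A dflt p) =
        map_pmf (\<lambda>(y, f). (y, f w)) (pair_pmf (p u) (Pi_pmf (A - {u}) dflt p))"
    using assms by (subst A, subst Pi_pmf_insert) (auto simp: pmf.map_comp o_def case_prod_unfold)
  also have "\<dots> = pair_pmf (p u) (map_pmf (\<lambda>f. f w) (Pi_pmf (A - {u}) dflt p))"
    using map_pair[of id "\<lambda>f. f w" "p u"] by simp
  also have "\<dots> = pair_pmf (p u) (p w)"
    using assms by (simp add: Pi_pmf_component)
  finally show ?thesis .
qed

lemma abs_expectation_le:
  fixes g :: "'a \<Rightarrow> real"
  assumes "finite (set_pmf M)" "\<And>y. y \<in> set_pmf M \<Longrightarrow> \<bar>g y\<bar> \<le> c"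
  shows "\<bar>measure_pmf.expectation M g\<bar> \<le> c"
proof -
  have "integrable (measure_pmf M) g" using assms(1) by (rule integrable_measure_pmf_finite)
  moreover have "AE y in M. - c \<le> g y" "AE y in M. g y \<le> c"
    using assms(2) by (auto intro!: AE_pmfI simp: abs_le_iff minus_le_iff)
  ultimately have "- c \<le> measure_pmf.expectation M g" "measure_pmf.expectation M g \<le> c"
    by (auto intro: measure_pmf.integral_le_const measure_pmf.integral_ge_const)
  then show ?thesis by linarith
qed

lemma expectation_sq_centered_le:
  fixes X :: "'a \<Rightarrow> real"
  assumes "finite (set_pmf M)"
  shows "measure_pmf.expectation M (\<lambda>y. (X y - measure_pmf.expectation M X)^2)
         \<le> measure_pmf.expectation M (\<lambda>y. (X y - t)^2)"
proof -
  define m where "m = measure_pmf.expectation M X"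
  have int: "integrable (measure_pmf M) h" for h :: "'a \<Rightarrow> real"
    using assms by (rule integrable_measure_pmf_finite)
  have "(\<lambda>y. (X y - t)^2) = (\<lambda>y. (X y - m)^2 + 2 * (m - t) * X y + (t^2 - m^2))"
    by (simp add: fun_eq_iff power2_eq_square algebra_simps)
  then have "measure_pmf.expectation M (\<lambda>y. (X y - t)^2) =
             measure_pmf.expectation M (\<lambda>y. (X y - m)^2) + (m - t)^2"
    by (simp add: int m_def power2_eq_square algebra_simps)
  then show ?thesis unfolding m_def by simp
qed

section \<open>Moment generating functions under bounded differences\<close>

lemma exp_le_one_plus_quadratic:
  fixes x :: real
  shows "exp x \<le> 1 + x + x^2 * exp \<bar>x\<bar> / 2"
proof -
  obtain t where t: "\<bar>t\<bar> \<le> \<bar>x\<bar>" "exp x = (\<Sum>m<2. x ^ m / fact m) + exp t / fact 2 * x ^ 2"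
    using Maclaurin_exp_le[of x 2] by blast
  have "exp t / 2 * x^2 \<le> exp \<bar>x\<bar> / 2 * x^2"
    using t(1) by (intro mult_right_mono) auto
  then show ?thesis using t(2) by (simp add: numeral_2_eq_2 mult_ac)
qed

lemma exp_moment_le_of_bounded_centered:
  fixes Y :: "'a \<Rightarrow> real"
  assumes fin: "finite (set_pmf M)"
    and bounded: "\<And>y. y \<in> set_pmf M \<Longrightarrow> \<bar>Y y\<bar> \<le> b"
    and centered: "measure_pmf.expectation M Y = 0"
    and var: "measure_pmf.expectation M (\<lambda>y. (Y y)^2) \<le> v"
  shows "measure_pmf.expectation M (\<lambda>y. exp (l * Y y)) \<le> exp (l^2 * v * exp (\<bar>l\<bar> * b) / 2)"
proof -
  define K where "K = l^2 * exp (\<bar>l\<bar> * b) / 2"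
  have int: "integrable (measure_pmf M) g" for g :: "'a \<Rightarrow> real"
    using fin by (rule integrable_measure_pmf_finite)
  have pointwise: "exp (l * Y y) \<le> 1 + l * Y y + K * (Y y)^2" if "y \<in> set_pmf M" for y
  proof -
    have "exp \<bar>l * Y y\<bar> \<le> exp (\<bar>l\<bar> * b)"
      using bounded[OF that] by (simp add: abs_mult mult_left_mono)
    then have "(l * Y y)^2 * exp \<bar>l * Y y\<bar> \<le> (l * Y y)^2 * exp (\<bar>l\<bar> * b)"
      by (rule mult_left_mono) simp
    then have "(l * Y y)^2 * exp \<bar>l * Y y\<bar> / 2 \<le> K * (Y y)^2"
      by (simp add: K_def power_mult_distrib mult_ac)
    then show ?thesis using exp_le_one_plus_quadratic[of "l * Y y"] by linarith
  qed
  have "measure_pmf.expectation M (\<lambda>y. exp (l * Y y)) \<le>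
        measure_pmf.expectation M (\<lambda>y. 1 + l * Y y + K * (Y y)^2)"
    by (intro integral_mono_AE int AE_pmfI pointwise)
  also have "\<dots> = 1 + K * measure_pmf.expectation M (\<lambda>y. (Y y)^2)"
    by (simp add: int centered)
  also have "\<dots> \<le> 1 + K * v" using var by (simp add: K_def mult_left_mono)
  also have "\<dots> \<le> exp (K * v)" by (rule exp_ge_add_one_self)
  finally show ?thesis by (simp add: K_def mult_ac)
qed

lemma exp_moment_le_of_rare_deviation:
  fixes X :: "'b \<Rightarrow> real"
  assumes fin: "finite (set_pmf M)"
    and close: "\<And>y. \<bar>X y - X d\<bar> \<le> c"
    and rare: "measure_pmf.prob M {y. y \<noteq> d} \<le> \<pi>"
  shows "measure_pmf.expectation M (\<lambda>y. exp (l * (X y - measure_pmf.expectation M X)))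
         \<le> exp (l^2 * (c^2 * \<pi>) * exp (\<bar>l\<bar> * (2 * c)) / 2)"
proof (rule exp_moment_le_of_bounded_centered[OF fin])
  have int: "integrable (measure_pmf M) h" for h :: "'b \<Rightarrow> real"
    using fin by (rule integrable_measure_pmf_finite)
  fix y
  have "X y - measure_pmf.expectation M X = measure_pmf.expectation M (\<lambda>y'. X y - X y')"
    by (simp add: int)
  also have "\<bar>\<dots>\<bar> \<le> 2 * c"
  proof (rule abs_expectation_le[OF fin])
    show "\<bar>X y - X y'\<bar> \<le> 2 * c" for y'
      using close[of y] close[of y'] by linarith
  qed
  finally show "\<bar>X y - measure_pmf.expectation M X\<bar> \<le> 2 * c" .
next
  have int: "integrable (measure_pmf M) h" for h :: "'b \<Rightarrow> real"
    using fin by (rule integrable_measure_pmf_finite)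
  show "measure_pmf.expectation M (\<lambda>y. X y - measure_pmf.expectation M X) = 0"
    by (simp add: int)
  have "measure_pmf.expectation M (\<lambda>y. (X y - measure_pmf.expectation M X)^2)
        \<le> measure_pmf.expectation M (\<lambda>y. (X y - X d)^2)"
    by (rule expectation_sq_centered_le[OF fin])
  also have "\<dots> \<le> measure_pmf.expectation M (\<lambda>y. c^2 * indicator {y. y \<noteq> d} y)"
  proof (intro integral_mono_AE int AE_pmfI)
    fix y
    have "(X y - X d)^2 \<le> c^2"
      using close[of y] by (metis abs_ge_zero power2_abs power_mono)
    then show "(X y - X d)^2 \<le> c^2 * indicator {y. y \<noteq> d} y"
      by (auto simp: indicator_def)
  qed
  also have "\<dots> \<le> c^2 * \<pi>"
    using rare by (simp add: mult_left_mono)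
  finally show "measure_pmf.expectation M (\<lambda>y. (X y - measure_pmf.expectation M X)^2) \<le> c^2 * \<pi>" .
qed

lemma exp_moment_Pi_pmf_insert_le:
  fixes F :: "('a \<Rightarrow> 'b) \<Rightarrow> real"
  assumes "finite A" "a \<notin> A" "\<And>b. b \<in> insert a A \<Longrightarrow> finite (set_pmf (p b))"
  defines "G \<equiv> \<lambda>f. measure_pmf.expectation (p a) (\<lambda>y. F (f(a := y)))"
  assumes step: "\<And>f. measure_pmf.expectation (p a) (\<lambda>y. exp (l * (F (f(a := y)) - G f))) \<le> B"
  shows "measure_pmf.expectation (Pi_pmf (insert a A) dflt p)
           (\<lambda>x. exp (l * (F x - measure_pmf.expectation (Pi_pmf (insert a A) dflt p) F)))
         \<le> B * measure_pmf.expectation (Pi_pmf A dflt p)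
                   (\<lambda>f. exp (l * (G f - measure_pmf.expectation (Pi_pmf A dflt p) G)))"
proof -
  let ?P = "Pi_pmf A dflt p"
  define EG where "EG = measure_pmf.expectation ?P G"
  have int: "integrable (measure_pmf ?P) h" for h :: "_ \<Rightarrow> real"
    using assms by (intro integrable_measure_pmf_finite finite_set_Pi_pmf) auto
  have "measure_pmf.expectation (Pi_pmf (insert a A) dflt p) F = EG"
    unfolding EG_def G_def using assms by (intro expectation_Pi_pmf_insert) auto
  then have "measure_pmf.expectation (Pi_pmf (insert a A) dflt p)
               (\<lambda>x. exp (l * (F x - measure_pmf.expectation (Pi_pmf (insert a A) dflt p) F)))
             = measure_pmf.expectation ?P
                 (\<lambda>f. measure_pmf.expectation (p a) (\<lambda>y. exp (l * (F (f(a := y)) - EG))))"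
    using assms by (simp only:) (rule expectation_Pi_pmf_insert)
  also have "\<dots> = measure_pmf.expectation ?P (\<lambda>f. exp (l * (G f - EG)) *
        measure_pmf.expectation (p a) (\<lambda>y. exp (l * (F (f(a := y)) - G f))))"
  proof -
    have "exp (l * (F (f(a := y)) - EG)) = exp (l * (G f - EG)) * exp (l * (F (f(a := y)) - G f))"
      for f y by (simp add: mult_exp_exp algebra_simps)
    then show ?thesis by simp
  qed
  also have "\<dots> \<le> measure_pmf.expectation ?P (\<lambda>f. exp (l * (G f - EG)) * B)"
    by (intro integral_mono_AE int AE_pmfI mult_left_mono step) auto
  finally show ?thesis by (simp add: EG_def mult.commute)
qed

lemma bounded_differences_fun_upd_expectation:
  fixes F :: "('a \<Rightarrow> 'b) \<Rightarrow> real"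
  assumes "finite (set_pmf q)" "a \<noteq> b" "\<And>x. \<bar>F x - F (x(b := d))\<bar> \<le> c"
  shows "\<bar>measure_pmf.expectation q (\<lambda>y. F (x(a := y)))
          - measure_pmf.expectation q (\<lambda>y. F ((x(b := d))(a := y)))\<bar> \<le> c"
proof -
  have "measure_pmf.expectation q (\<lambda>y. F (x(a := y))) - measure_pmf.expectation q (\<lambda>y. F ((x(b := d))(a := y)))
        = measure_pmf.expectation q (\<lambda>y. F (x(a := y)) - F ((x(a := y))(b := d)))"
    using assms by (simp add: integrable_measure_pmf_finite fun_upd_twist)
  also have "\<bar>\<dots>\<bar> \<le> c"
    using assms by (intro abs_expectation_le) auto
  finally show ?thesis .
qed

lemma exp_moment_Pi_pmf_bounded_differences:
  fixes p :: "'a \<Rightarrow> 'b pmf" and d :: "'a \<Rightarrow> 'b" and F :: "('a \<Rightarrow> 'b) \<Rightarrow> real"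
  assumes "finite A"
    and "\<And>a. a \<in> A \<Longrightarrow> finite (set_pmf (p a))"
    and "\<And>x a. a \<in> A \<Longrightarrow> \<bar>F x - F (x(a := d a))\<bar> \<le> c"
    and "\<And>a. a \<in> A \<Longrightarrow> measure_pmf.prob (p a) {y. y \<noteq> d a} \<le> \<pi> a"
  shows "measure_pmf.expectation (Pi_pmf A dflt p)
           (\<lambda>x. exp (l * (F x - measure_pmf.expectation (Pi_pmf A dflt p) F)))
         \<le> exp (l^2 * c^2 * exp (2 * \<bar>l\<bar> * c) * (\<Sum>a\<in>A. \<pi> a) / 2)"
  using assms
proof (induction A arbitrary: F rule: finite_induct)
  case empty
  then show ?case by simp
next
  case (insert a A F)
  have differences: "\<bar>F x - F (x(b := d b))\<bar> \<le> c" if "b \<in> insert a A" for x b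
    using insert.prems(2)[of b x] that by (simp add: fun_upd_def)
  have fin_a: "finite (set_pmf (p a))"
    using insert by simp
  \<comment> \<open>Doob martingale step: G is the conditional expectation of F given the coordinates in A.\<close>
  define G where "G f = measure_pmf.expectation (p a) (\<lambda>y. F (f(a := y)))" for f
  have G_differences: "\<bar>G x - G (x(b := d b))\<bar> \<le> c" if "b \<in> A" for x b
    unfolding G_def
  proof (rule bounded_differences_fun_upd_expectation[OF fin_a])
    show "a \<noteq> b" using that insert.hyps by auto
    show "\<bar>F x - F (x(b := d b))\<bar> \<le> c" for x
      using that differences by simp
  qed
  have IH: "measure_pmf.expectation (Pi_pmf A dflt p)
              (\<lambda>f. exp (l * (G f - measure_pmf.expectation (Pi_pmf A dflt p) G)))
            \<le> exp (l^2 * c^2 * exp (2 * \<bar>l\<bar> * c) * (\<Sum>b\<in>A. \<pi> b) / 2)"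
    by (rule insert.IH) (use insert.prems G_differences in blast)+
  have "measure_pmf.expectation (p a) (\<lambda>y. exp (l * (F (f(a := y)) - G f)))
        \<le> exp (l^2 * (c^2 * \<pi> a) * exp (\<bar>l\<bar> * (2 * c)) / 2)" for f
    unfolding G_def
  proof (rule exp_moment_le_of_rare_deviation[OF fin_a])
    show "\<bar>F (f(a := y)) - F (f(a := d a))\<bar> \<le> c" for y
      using differences[of a "f(a := y)"] by simp
  qed (use insert.prems in simp)
  then have "measure_pmf.expectation (Pi_pmf (insert a A) dflt p)
               (\<lambda>x. exp (l * (F x - measure_pmf.expectation (Pi_pmf (insert a A) dflt p) F)))
             \<le> exp (l^2 * (c^2 * \<pi> a) * exp (\<bar>l\<bar> * (2 * c)) / 2)
               * measure_pmf.expectation (Pi_pmf A dflt p)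
                   (\<lambda>f. exp (l * (G f - measure_pmf.expectation (Pi_pmf A dflt p) G)))"
    unfolding G_def using insert by (intro exp_moment_Pi_pmf_insert_le) auto
  also have "\<dots> \<le> exp (l^2 * (c^2 * \<pi> a) * exp (\<bar>l\<bar> * (2 * c)) / 2)
                   * exp (l^2 * c^2 * exp (2 * \<bar>l\<bar> * c) * (\<Sum>b\<in>A. \<pi> b) / 2)"
    by (rule mult_left_mono[OF IH]) simp
  also have "\<dots> = exp (l^2 * c^2 * exp (2 * \<bar>l\<bar> * c) * (\<Sum>b\<in>insert a A. \<pi> b) / 2)"
    using insert.hyps by (simp add: mult_exp_exp[symmetric] algebra_simps add_divide_distrib)
  finally show ?case .
qed

section \<open>The quadratic form behind psi\<close>

lemma sum_power_Suc_squared_le: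
  fixes a :: "'i \<Rightarrow> real"
  assumes "\<And>i. i \<in> I \<Longrightarrow> a i \<ge> 0"
  shows "(\<Sum>i\<in>I. a i ^ Suc m)^2 \<le> (\<Sum>i\<in>I. a i ^ m) * (\<Sum>i\<in>I. a i ^ Suc (Suc m))"
proof -
  have "sqrt (a i ^ m) * sqrt (a i ^ Suc (Suc m)) = sqrt ((a i ^ Suc m)^2)" for i
    by (simp add: real_sqrt_mult[symmetric] power2_eq_square mult_ac)
  then have "(\<Sum>i\<in>I. a i ^ Suc m) = (\<Sum>i\<in>I. sqrt (a i ^ m) * sqrt (a i ^ Suc (Suc m)))"
    using assms by (intro sum.cong refl) simp
  also have "(\<dots>)^2 \<le> (\<Sum>i\<in>I. (sqrt (a i ^ m))^2) * (\<Sum>i\<in>I. (sqrt (a i ^ Suc (Suc m)))^2)"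
    by (rule Cauchy_Schwarz_ineq_sum)
  also have "\<dots> = (\<Sum>i\<in>I. a i ^ m) * (\<Sum>i\<in>I. a i ^ Suc (Suc m))"
    using assms by simp
  finally show ?thesis .
qed

lemma sum_squares_cubed_le:
  fixes a :: "'i \<Rightarrow> real"
  assumes "\<And>i. i \<in> I \<Longrightarrow> a i \<ge> 0"
  shows "(\<Sum>i\<in>I. a i ^ 2)^3 \<le> (\<Sum>i\<in>I. a i)^2 * (\<Sum>i\<in>I. a i ^ 4)"
proof -
  define s p2 p3 p4 where "s = (\<Sum>i\<in>I. a i)" and "p2 = (\<Sum>i\<in>I. a i ^ 2)"
    and "p3 = (\<Sum>i\<in>I. a i ^ 3)" and "p4 = (\<Sum>i\<in>I. a i ^ 4)"
  have "p2 \<ge> 0" "p4 \<ge> 0" unfolding p2_def p4_def by (simp_all add: sum_nonneg)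
  have p3: "p2^2 \<le> s * p3"
    using sum_power_Suc_squared_le[where I = I and a = a and m = 1, OF assms] by (simp add: s_def p2_def p3_def power2_eq_square power3_eq_cube mult.assoc)
  have p4: "p3^2 \<le> p2 * p4"
    using sum_power_Suc_squared_le[where I = I and a = a and m = 2, OF assms] by (simp add: p2_def p3_def p4_def)
  have "p2 * p2^3 = (p2^2)^2" by algebra
  also have "\<dots> \<le> (s * p3)^2"
    using p3 \<open>p2 \<ge> 0\<close> by (intro power_mono) auto
  also have "\<dots> = s^2 * p3^2" by algebra
  also have "\<dots> \<le> p2 * (s^2 * p4)"
    using mult_left_mono[OF p4, of "s^2"] by (simp add: mult_ac)
  finally have "p2 * p2^3 \<le> p2 * (s^2 * p4)" .
  then have "p2^3 \<le> s^2 * p4"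
    using \<open>p2 \<ge> 0\<close> \<open>p4 \<ge> 0\<close> by (cases "p2 = 0") auto
  then show ?thesis unfolding s_def p2_def p4_def .
qed

lemma mean_field_power_sum_ineq:
  fixes s z p2 p3 p4 :: real
  assumes "s + z = 1" "s > 0" "z \<ge> 0" "p2 \<ge> 0"
    and p3: "p2^2 \<le> s * p3" and p4: "p2^3 \<le> s^2 * p4"
  shows "2 * (p2 + 2 * z * s)^2 - (p2 + 2 * z * s) - (p4 + 4 * z * p3 + 4 * z^2 * p2) \<le> 0"
proof -
  define M where "M = p2 + 2 * z * s"
  \<comment> \<open>Multiplied by s^2 and homogenised with s + z = 1, the claim follows from p3, p4 and this identity.\<close>
  have identity: "s^2 * (2 * M^2 - M * (s + z)^2 - 4 * z^2 * p2) - p2^3 - 4 * z * s * p2^2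
                  = - ((p2 - s^2 + z * s)^2 * (p2 + 2 * z * s))"
    unfolding M_def by (simp add: power2_eq_square power3_eq_cube algebra_simps)
  have "(p2 - s^2 + z * s)^2 * (p2 + 2 * z * s) \<ge> 0"
    using assms by simp
  moreover have "4 * z * s * p2^2 \<le> s^2 * (4 * z * p3)"
    using mult_left_mono[OF p3, of "4 * z * s"] assms by (simp add: power2_eq_square algebra_simps)
  ultimately have "s^2 * (2 * M^2 - M * (s + z)^2 - 4 * z^2 * p2) - s^2 * p4 - s^2 * (4 * z * p3) \<le> 0"
    using identity p4 by linarith
  then have "s^2 * (2 * M^2 - M - (p4 + 4 * z * p3 + 4 * z^2 * p2)) \<le> 0"
    using assms(1) by (simp add: algebra_simps)
  then show ?thesis
    unfolding M_def[symmetric] using assms(2) by (simp add: mult_le_0_iff)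
qed

definition opinion_vector :: "nat option \<Rightarrow> nat \<Rightarrow> real" where
  "opinion_vector s i = of_bool (s = Some i)"

text \<open>The form Q of the header; it is affine in each argument, so expectations over independent
  arguments pass through it.\<close>

definition usd_form :: "nat \<Rightarrow> (nat \<Rightarrow> real) \<Rightarrow> (nat \<Rightarrow> real) \<Rightarrow> real" where
  "usd_form k a b =
     2 * (\<Sum>i\<in>{1..k}. a i) * (\<Sum>i\<in>{1..k}. b i) - (\<Sum>i\<in>{1..k}. a i) - (\<Sum>i\<in>{1..k}. a i * b i)"

lemma psi_eq_usd_form: "psi k x = usd_form k (alpha x) (alpha x)"
  by (simp add: psi_def beta_def gamma_def usd_form_def power2_eq_square algebra_simps)

lemma sum_opinion_vector: "(\<Sum>i\<in>{1..k}. opinion_vector s i) = of_bool (s \<in> Some ` {1..k})"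
  by (cases s) (auto simp: opinion_vector_def)

lemma sum_opinion_vector_mult:
  "(\<Sum>i\<in>{1..k}. opinion_vector s i * opinion_vector t i) = of_bool (s = t \<and> s \<in> Some ` {1..k})"
  by (cases s) (auto simp: opinion_vector_def)

lemma usd_form_opinion_vector_self: "usd_form k (opinion_vector s) (opinion_vector s) = 0"
  unfolding usd_form_def sum_opinion_vector sum_opinion_vector_mult by simp

lemma abs_usd_form_opinion_vector: "\<bar>usd_form k (opinion_vector s) (opinion_vector t)\<bar> \<le> 1"
  unfolding usd_form_def sum_opinion_vector sum_opinion_vector_mult by simp

lemma usd_form_average:
  fixes a b :: "'v::finite \<Rightarrow> nat \<Rightarrow> real"
  defines "N \<equiv> real CARD('v)"
  shows "(\<Sum>u\<in>UNIV. \<Sum>w\<in>UNIV. usd_form k (a u) (b w)) =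
         N^2 * usd_form k (\<lambda>i. (\<Sum>u\<in>UNIV. a u i) / N) (\<lambda>i. (\<Sum>w\<in>UNIV. b w i) / N)"
proof -
  define A where "A i = (\<Sum>u\<in>UNIV. a u i)" for i
  define B where "B i = (\<Sum>w\<in>UNIV. b w i)" for i
  have N: "N > 0" unfolding N_def by simp
  have swap_A: "(\<Sum>u\<in>UNIV. \<Sum>i\<in>{1..k}. a u i) = (\<Sum>i\<in>{1..k}. A i)"
    unfolding A_def by (rule sum.swap)
  have swap_B: "(\<Sum>w\<in>UNIV. \<Sum>i\<in>{1..k}. b w i) = (\<Sum>i\<in>{1..k}. B i)"
    unfolding B_def by (rule sum.swap)
  have expand: "(\<Sum>u\<in>UNIV. \<Sum>w\<in>UNIV. usd_form k (a u) (b w)) =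
        2 * (\<Sum>u\<in>UNIV. \<Sum>w\<in>UNIV. (\<Sum>i\<in>{1..k}. a u i) * (\<Sum>i\<in>{1..k}. b w i))
        - (\<Sum>u\<in>UNIV. \<Sum>w\<in>(UNIV :: 'v set). \<Sum>i\<in>{1..k}. a u i)
        - (\<Sum>u\<in>UNIV. \<Sum>w\<in>UNIV. \<Sum>i\<in>{1..k}. a u i * b w i)"
    by (simp only: usd_form_def sum_subtractf sum_distrib_left[symmetric] mult.assoc)
  have cross: "(\<Sum>u\<in>UNIV. \<Sum>w\<in>UNIV. (\<Sum>i\<in>{1..k}. a u i) * (\<Sum>i\<in>{1..k}. b w i)) =
             (\<Sum>i\<in>{1..k}. A i) * (\<Sum>i\<in>{1..k}. B i)"
    unfolding sum_product[symmetric] swap_A swap_B ..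
  have linear: "(\<Sum>u\<in>UNIV. \<Sum>w\<in>(UNIV :: 'v set). \<Sum>i\<in>{1..k}. a u i) = N * (\<Sum>i\<in>{1..k}. A i)"
    unfolding swap_A[symmetric] N_def by (simp add: sum_distrib_left)
  have inner: "(\<Sum>u\<in>UNIV. \<Sum>w\<in>UNIV. \<Sum>i\<in>{1..k}. a u i * b w i) = (\<Sum>i\<in>{1..k}. A i * B i)"
  proof -
    have "(\<Sum>u\<in>UNIV. \<Sum>w\<in>UNIV. \<Sum>i\<in>{1..k}. a u i * b w i) =
          (\<Sum>u\<in>UNIV. \<Sum>i\<in>{1..k}. \<Sum>w\<in>UNIV. a u i * b w i)"
      by (intro sum.cong refl sum.swap)
    also have "\<dots> = (\<Sum>i\<in>{1..k}. \<Sum>u\<in>UNIV. \<Sum>w\<in>UNIV. a u i * b w i)"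
      by (rule sum.swap)
    finally show ?thesis unfolding A_def B_def sum_product .
  qed
  have "(\<Sum>u\<in>UNIV. \<Sum>w\<in>UNIV. usd_form k (a u) (b w)) =
        2 * ((\<Sum>i\<in>{1..k}. A i) * (\<Sum>i\<in>{1..k}. B i)) - N * (\<Sum>i\<in>{1..k}. A i)
        - (\<Sum>i\<in>{1..k}. A i * B i)"
    unfolding expand cross linear inner ..
  also have "\<dots> = N^2 * usd_form k (\<lambda>i. A i / N) (\<lambda>i. B i / N)"
  proof -
    have "(\<Sum>i\<in>{1..k}. A i / N * (B i / N)) = (\<Sum>i\<in>{1..k}. A i * B i) / N^2"
      by (simp add: sum_divide_distrib power2_eq_square)
    then show ?thesis
      using N by (simp add: usd_form_def sum_divide_distrib[symmetric] power2_eq_square field_simps)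
  qed
  finally show ?thesis unfolding A_def B_def .
qed

lemma alpha_eq_average:
  fixes x :: "'v::finite \<Rightarrow> nat option"
  shows "alpha x i = (\<Sum>u\<in>UNIV. opinion_vector (x u) i) / real CARD('v)"
  by (simp add: alpha_def opinion_vector_def)

lemma psi_eq_double_sum:
  fixes x :: "'v::finite \<Rightarrow> nat option"
  shows "psi k x = (\<Sum>u\<in>UNIV. \<Sum>w\<in>UNIV. usd_form k (opinion_vector (x u)) (opinion_vector (x w)))
                   / (real CARD('v))^2"
  unfolding usd_form_average psi_eq_usd_form alpha_eq_average[abs_def] by simp

lemma psi_bounded_differences:
  fixes x :: "'v::finite \<Rightarrow> nat option"
  shows "\<bar>psi k x - psi k (x(a := t))\<bar> \<le> 4 / real CARD('v)"
proof -
  define N where "N = real CARD('v)"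
  have N: "N > 0" unfolding N_def by simp
  define D where "D u w = usd_form k (opinion_vector (x u)) (opinion_vector (x w))
    - usd_form k (opinion_vector ((x(a := t)) u)) (opinion_vector ((x(a := t)) w))" for u w
  \<comment> \<open>Only the terms in row a or column a of the double sum change.\<close>
  have D: "\<bar>D u w\<bar> \<le> 2 * of_bool (u = a) + 2 * of_bool (w = a)" for u w
  proof (cases "u = a \<or> w = a")
    case True
    then show ?thesis unfolding D_def
      using abs_usd_form_opinion_vector[of k "x u" "x w"]
        abs_usd_form_opinion_vector[of k "(x(a := t)) u" "(x(a := t)) w"] by auto
  qed (simp add: D_def)
  have "\<bar>psi k x - psi k (x(a := t))\<bar> = \<bar>\<Sum>u\<in>UNIV. \<Sum>w\<in>UNIV. D u w\<bar> / N^2"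
    unfolding psi_eq_double_sum[of k x] psi_eq_double_sum[of k "x(a := t)"] D_def N_def
    by (simp add: sum_subtractf diff_divide_distrib[symmetric] abs_divide)
  also have "\<bar>\<Sum>u\<in>UNIV. \<Sum>w\<in>UNIV. D u w\<bar> \<le> (\<Sum>u\<in>UNIV. \<Sum>w\<in>UNIV. \<bar>D u w\<bar>)"
    by (rule order.trans[OF sum_abs sum_mono]) (rule sum_abs)
  also have "\<dots> \<le> (\<Sum>u\<in>UNIV. \<Sum>w\<in>(UNIV :: 'v set). 2 * of_bool (u = a) + 2 * of_bool (w = a))"
    by (intro sum_mono D)
  also have "\<dots> = 4 * N"
    by (simp add: sum.distrib N_def flip: sum_distrib_left)
  finally have "\<bar>psi k x - psi k (x(a := t))\<bar> \<le> 4 * N / N^2"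
    using N by (simp add: divide_right_mono fun_upd_def)
  also have "\<dots> = 4 / N"
    using N by (simp add: power2_eq_square)
  finally show ?thesis unfolding N_def .
qed

lemma expectation_usd_form_left:
  assumes "finite (set_pmf M)"
  shows "measure_pmf.expectation M (\<lambda>y. usd_form k (a y) b) =
         usd_form k (\<lambda>i. measure_pmf.expectation M (\<lambda>y. a y i)) b"
  using assms by (simp add: usd_form_def integrable_measure_pmf_finite sum_distrib_right)

lemma expectation_usd_form_right:
  assumes "finite (set_pmf M)"
  shows "measure_pmf.expectation M (\<lambda>y. usd_form k a (b y)) =
         usd_form k a (\<lambda>i. measure_pmf.expectation M (\<lambda>y. b y i))"
  using assms by (simp add: usd_form_def integrable_measure_pmf_finite sum_distrib_left)

lemma usd_form_mean_field_nonpos: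
  assumes nonneg: "\<And>i. i \<in> {1..k} \<Longrightarrow> a i \<ge> 0" and "z \<ge> 0"
    and total: "(\<Sum>i\<in>{1..k}. a i) + z = 1"
  shows "usd_form k (\<lambda>i. a i * (a i + 2 * z)) (\<lambda>i. a i * (a i + 2 * z)) \<le> 0"
proof -
  define s p2 p3 p4 where "s = (\<Sum>i\<in>{1..k}. a i)" and "p2 = (\<Sum>i\<in>{1..k}. a i ^ 2)"
    and "p3 = (\<Sum>i\<in>{1..k}. a i ^ 3)" and "p4 = (\<Sum>i\<in>{1..k}. a i ^ 4)"
  have sum_b: "(\<Sum>i\<in>{1..k}. a i * (a i + 2 * z)) = p2 + 2 * z * s"
    by (simp add: p2_def s_def power2_eq_square algebra_simps sum.distrib sum_distrib_left)
  have "(a i * (a i + 2 * z)) * (a i * (a i + 2 * z)) = a i ^ 4 + 4 * z * a i ^ 3 + 4 * z^2 * a i ^ 2"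
    for i by algebra
  then have sum_b_squared: "(\<Sum>i\<in>{1..k}. (a i * (a i + 2 * z)) * (a i * (a i + 2 * z)))
                            = p4 + 4 * z * p3 + 4 * z^2 * p2"
    by (simp add: p2_def p3_def p4_def sum.distrib sum_distrib_left)
  show ?thesis
  proof (cases "s = 0")
    case True
    then have "a i = 0" if "i \<in> {1..k}" for i
      using that nonneg sum_nonneg_eq_0_iff[of "{1..k}" a] unfolding s_def by auto
    then show ?thesis by (simp add: usd_form_def)
  next
    case False
    then have "s > 0" unfolding s_def using nonneg by (metis less_eq_real_def sum_nonneg)
    moreover have "p2 \<ge> 0" unfolding p2_def by (simp add: sum_nonneg)
    moreover have "p2^2 \<le> s * p3"
      using sum_power_Suc_squared_le[where I = "{1..k}" and a = a and m = 1, OF nonneg]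
      by (simp add: s_def p2_def p3_def power2_eq_square power3_eq_cube mult.assoc)
    moreover have "p2^3 \<le> s^2 * p4"
      using sum_squares_cubed_le[where I = "{1..k}" and a = a, OF nonneg]
      by (simp add: s_def p2_def p4_def)
    ultimately have "2 * (p2 + 2 * z * s)^2 - (p2 + 2 * z * s) - (p4 + 4 * z * p3 + 4 * z^2 * p2) \<le> 0"
      using total \<open>z \<ge> 0\<close> by (intro mean_field_power_sum_ineq) (auto simp: s_def)
    then show ?thesis
      unfolding usd_form_def sum_b sum_b_squared s_def[symmetric] power2_eq_square
      by (simp only: mult.assoc)
  qed
qed

lemma neg_usd_form_self_le:
  assumes nonneg: "\<And>i. i \<in> {1..k} \<Longrightarrow> a i \<ge> 0"
  shows "- usd_form k a a \<le> (\<Sum>i\<in>{1..k}. a i) * (1 - (\<Sum>i\<in>{1..k}. a i))"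
proof -
  define s where "s = (\<Sum>i\<in>{1..k}. a i)"
  have "(\<Sum>i\<in>{1..k}. a i * a i) \<le> (\<Sum>i\<in>{1..k}. a i * s)"
    unfolding s_def using nonneg by (intro sum_mono mult_left_mono member_le_sum) auto
  also have "\<dots> = s * s"
    by (simp add: s_def sum_distrib_right)
  finally show ?thesis
    unfolding usd_form_def s_def[symmetric] by (simp add: algebra_simps)
qed

section \<open>One round of the gossip USD\<close>

definition vertex_step :: "('v::finite \<Rightarrow> nat option) \<Rightarrow> 'v \<Rightarrow> nat option pmf" where
  "vertex_step opn u = map_pmf (\<lambda>v. usd_update (opn u) (opn v)) (pmf_of_set UNIV)"

lemma gossip_step_eq_Pi_pmf: "gossip_step opn = Pi_pmf UNIV undefined (vertex_step opn)"
  unfolding gossip_step_def vertex_step_def[abs_def] ..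

lemma finite_set_vertex_step [simp]: "finite (set_pmf (vertex_step opn u))"
  by (simp add: vertex_step_def)

lemma finite_set_gossip_step: "finite (set_pmf (gossip_step opn))"
  unfolding gossip_step_eq_Pi_pmf by (intro finite_set_Pi_pmf) auto

lemma beta_eq_decided_fraction:
  fixes opn :: "'v::finite \<Rightarrow> nat option"
  assumes "\<forall>u. opn u \<in> opinions k"
  shows "beta k opn = real (card {v. opn v \<noteq> None}) / real CARD('v)"
proof -
  have "beta k opn = (\<Sum>v\<in>UNIV. \<Sum>i\<in>{1..k}. opinion_vector (opn v) i) / real CARD('v)"
    unfolding beta_def alpha_eq_average by (simp add: sum_divide_distrib[symmetric] sum.swap[of _ UNIV])
  also have "(\<Sum>v\<in>UNIV. \<Sum>i\<in>{1..k}. opinion_vector (opn v) i) = (\<Sum>v\<in>UNIV. of_bool (opn v \<noteq> None))"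
  proof (intro sum.cong refl)
    fix v
    show "(\<Sum>i\<in>{1..k}. opinion_vector (opn v) i) = of_bool (opn v \<noteq> None)"
      unfolding sum_opinion_vector using assms[rule_format, of v] by (auto simp: opinions_def)
  qed
  finally show ?thesis by simp
qed

lemma undecided_fraction_eq:
  fixes opn :: "'v::finite \<Rightarrow> nat option"
  assumes "\<forall>u. opn u \<in> opinions k"
  shows "real (card {v. opn v = None}) / real CARD('v) = 1 - beta k opn"
proof -
  have "card {v. opn v = None} + card {v. opn v \<noteq> None} =
        card ({v. opn v = None} \<union> {v. opn v \<noteq> None})"
    by (rule card_Un_disjoint[symmetric]) auto
  also have "{v. opn v = None} \<union> {v. opn v \<noteq> None} = UNIV"
    by blast
  finally have "card {v. opn v = None} + card {v. opn v \<noteq> None} = CARD('v)" .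
  then show ?thesis
    unfolding beta_eq_decided_fraction[OF assms] by (simp add: field_simps)
qed

lemma usd_update_undecided: "usd_update s None = s"
  by (cases s) auto

lemma prob_vertex_step_changes_le:
  fixes opn :: "'v::finite \<Rightarrow> nat option"
  assumes "\<forall>u. opn u \<in> opinions k"
  shows "measure_pmf.prob (vertex_step opn u) {z. z \<noteq> opn u} \<le> beta k opn"
proof -
  have "measure_pmf.prob (vertex_step opn u) {z. z \<noteq> opn u} =
        real (card {v. usd_update (opn u) (opn v) \<noteq> opn u}) / real CARD('v)"
    by (simp add: vertex_step_def measure_pmf_of_set vimage_def)
  also have "\<dots> \<le> real (card {v. opn v \<noteq> None}) / real CARD('v)"
  proof (intro divide_right_mono of_nat_mono card_mono)
    show "{v. usd_update (opn u) (opn v) \<noteq> opn u} \<subseteq> {v. opn v \<noteq> None}"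
      by (rule Collect_mono) (metis usd_update_undecided)
  qed auto
  finally show ?thesis unfolding beta_eq_decided_fraction[OF assms] .
qed

lemma opinion_vector_usd_update:
  "opinion_vector (usd_update s t) i =
     opinion_vector s i * (opinion_vector t i + of_bool (t = None)) + of_bool (s = None) * opinion_vector t i"
  by (cases s; cases t) (auto simp: opinion_vector_def)

definition expected_opinion_vector :: "('v::finite \<Rightarrow> nat option) \<Rightarrow> 'v \<Rightarrow> nat \<Rightarrow> real" where
  "expected_opinion_vector opn u i = measure_pmf.expectation (vertex_step opn u) (\<lambda>z. opinion_vector z i)"

lemma expected_opinion_vector_eq:
  fixes opn :: "'v::finite \<Rightarrow> nat option"
  assumes "\<forall>u. opn u \<in> opinions k"
  shows "expected_opinion_vector opn u i =
         opinion_vector (opn u) i * (alpha opn i + (1 - beta k opn)) + of_bool (opn u = None) * alpha opn i"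
proof -
  define N where "N = real CARD('v)"
  define X where "X = (\<Sum>v\<in>UNIV. opinion_vector (opn v) i)"
  define Y where "Y = (\<Sum>v\<in>UNIV. of_bool (opn v = None) :: real)"
  have "expected_opinion_vector opn u i = (\<Sum>v\<in>UNIV. opinion_vector (usd_update (opn u) (opn v)) i) / N"
    by (simp add: expected_opinion_vector_def vertex_step_def integral_pmf_of_set N_def)
  also have "(\<Sum>v\<in>UNIV. opinion_vector (usd_update (opn u) (opn v)) i) =
             opinion_vector (opn u) i * (X + Y) + of_bool (opn u = None) * X"
    unfolding X_def Y_def opinion_vector_usd_update
    by (simp only: sum.distrib sum_distrib_left distrib_left)
  also have "(opinion_vector (opn u) i * (X + Y) + of_bool (opn u = None) * X) / N =
             opinion_vector (opn u) i * (X / N + Y / N) + of_bool (opn u = None) * (X / N)"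
    by (simp only: add_divide_distrib distrib_left times_divide_eq_right)
  also have "X / N = alpha opn i"
    unfolding X_def N_def alpha_eq_average ..
  also have "Y / N = 1 - beta k opn"
    unfolding Y_def N_def using undecided_fraction_eq[OF assms] by simp
  finally show ?thesis .
qed

lemma average_expected_opinion_vector:
  fixes opn :: "'v::finite \<Rightarrow> nat option"
  assumes valid: "\<forall>u. opn u \<in> opinions k"
  shows "(\<Sum>u\<in>UNIV. expected_opinion_vector opn u i) / real CARD('v) =
         alpha opn i * (alpha opn i + 2 * (1 - beta k opn))"
proof -
  define N where "N = real CARD('v)"
  have N: "N > 0" unfolding N_def by simp
  have decided: "(\<Sum>u\<in>UNIV. opinion_vector (opn u) i) = N * alpha opn i"
    unfolding alpha_eq_average N_def by simp
  have undecided: "(\<Sum>u\<in>UNIV. of_bool (opn u = None)) = N * (1 - beta k opn)"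
    using undecided_fraction_eq[OF valid] N by (simp add: N_def field_simps)
  have "(\<Sum>u\<in>UNIV. expected_opinion_vector opn u i) =
        (\<Sum>u\<in>UNIV. opinion_vector (opn u) i) * (alpha opn i + (1 - beta k opn))
        + (\<Sum>u\<in>UNIV. of_bool (opn u = None)) * alpha opn i"
    unfolding expected_opinion_vector_eq[OF valid] by (simp only: sum.distrib sum_distrib_right)
  then show ?thesis
    unfolding decided undecided N_def[symmetric] using N by (simp add: field_simps)
qed

lemma beta_nonneg: "beta k opn \<ge> 0"
  by (simp add: beta_def alpha_def sum_nonneg)

lemma beta_le_one:
  assumes "\<forall>u. opn u \<in> opinions k"
  shows "beta k opn \<le> 1"
  unfolding beta_eq_decided_fraction[OF assms] by (simp add: card_mono divide_le_eq_1)

lemma expectation_usd_form_Pi_pmf: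
  fixes p :: "'a::finite \<Rightarrow> nat option pmf"
  assumes fin: "\<And>u. finite (set_pmf (p u))"
  defines "m u \<equiv> (\<lambda>i. measure_pmf.expectation (p u) (\<lambda>z. opinion_vector z i))"
  shows "measure_pmf.expectation (Pi_pmf UNIV dflt p)
           (\<lambda>x. usd_form k (opinion_vector (x u)) (opinion_vector (x w)))
         = (if u = w then 0 else usd_form k (m u) (m w))"
proof (cases "u = w")
  case False
  have "measure_pmf.expectation (Pi_pmf UNIV dflt p)
          (\<lambda>x. usd_form k (opinion_vector (x u)) (opinion_vector (x w)))
        = measure_pmf.expectation (map_pmf (\<lambda>x. (x u, x w)) (Pi_pmf UNIV dflt p))
            (\<lambda>(s, t). usd_form k (opinion_vector s) (opinion_vector t))"
    by simp
  also have "\<dots> = measure_pmf.expectation (pair_pmf (p u) (p w))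
                     (\<lambda>(s, t). usd_form k (opinion_vector s) (opinion_vector t))"
    using False by (simp add: Pi_pmf_pair_components)
  also have "\<dots> = measure_pmf.expectation (p w)
                     (\<lambda>t. measure_pmf.expectation (p u) (\<lambda>s. usd_form k (opinion_vector s) (opinion_vector t)))"
    using fin by (simp add: expectation_pair_pmf_finite)
  also have "\<dots> = usd_form k (m u) (m w)"
    using fin by (simp add: expectation_usd_form_left expectation_usd_form_right m_def)
  finally show ?thesis using False by simp
qed (simp add: usd_form_opinion_vector_self)

lemma expectation_psi_gossip_step:
  fixes opn :: "'v::finite \<Rightarrow> nat option"
  defines "m \<equiv> expected_opinion_vector opn"
  shows "measure_pmf.expectation (gossip_step opn) (psi k) =
         ((\<Sum>u\<in>UNIV. \<Sum>w\<in>UNIV. usd_form k (m u) (m w)) - (\<Sum>u\<in>UNIV. usd_form k (m u) (m u)))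
         / (real CARD('v))^2"
proof -
  define T where "T u w = usd_form k (m u) (m w)" for u w
  have "measure_pmf.expectation (gossip_step opn)
          (\<lambda>x. usd_form k (opinion_vector (x u)) (opinion_vector (x w)))
        = (if u = w then 0 else T u w)" for u w
    unfolding T_def m_def gossip_step_eq_Pi_pmf expected_opinion_vector_def[abs_def]
    by (rule expectation_usd_form_Pi_pmf) simp
  then have "measure_pmf.expectation (gossip_step opn) (psi k) =
             (\<Sum>u\<in>UNIV. \<Sum>w\<in>UNIV. if u = w then 0 else T u w) / (real CARD('v))^2"
    unfolding psi_eq_double_sum by (simp add: integrable_measure_pmf_finite finite_set_gossip_step)
  moreover have "(\<Sum>w\<in>UNIV. if u = w then 0 else T u w) = (\<Sum>w\<in>UNIV. T u w) - T u u" for u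
  proof -
    have "(\<Sum>w\<in>UNIV. if u = w then 0 else T u w) = (\<Sum>w\<in>UNIV. T u w - (if u = w then T u u else 0))"
      by (intro sum.cong) auto
    then show ?thesis by (simp add: sum_subtractf)
  qed
  ultimately show ?thesis by (simp add: T_def sum_subtractf)
qed

lemma neg_usd_form_expected_opinion_vector_le:
  fixes opn :: "'v::finite \<Rightarrow> nat option"
  assumes valid: "\<forall>u. opn u \<in> opinions k"
  shows "- usd_form k (expected_opinion_vector opn u) (expected_opinion_vector opn u) \<le> beta k opn"
proof -
  define s where "s = (\<Sum>i\<in>{1..k}. expected_opinion_vector opn u i)"
  note m = expected_opinion_vector_eq[OF valid]
  have "0 \<le> alpha opn i" for i by (simp add: alpha_def)
  then have "- usd_form k (expected_opinion_vector opn u) (expected_opinion_vector opn u) \<le> s * (1 - s)"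
    unfolding s_def using beta_le_one[OF valid]
    by (intro neg_usd_form_self_le) (simp add: m opinion_vector_def)
  \<comment> \<open>s is the probability that u is decided after the step: beta if u is undecided,
     at least 1 - beta if it holds an opinion.\<close>
  also have "s * (1 - s) \<le> beta k opn"
  proof -
    have "opn u \<in> opinions k" using valid by simp
    then consider "opn u = None" | j where "j \<in> {1..k}" "opn u = Some j"
      unfolding opinions_def by auto
    then show ?thesis
    proof cases
      case 1
      then have "s = beta k opn" by (simp add: s_def m opinion_vector_def beta_def)
      then show ?thesis by (simp add: right_diff_distrib)
    next
      case 2
      then have "s = alpha opn j + (1 - beta k opn)"
        by (simp add: s_def m opinion_vector_def)
      then have "1 - s \<le> beta k opn"
        using \<open>0 \<le> alpha opn j\<close> by simp
      moreover have "s * (1 - s) \<le> 1 - s"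
        using zero_le_square[of "1 - s"] by (simp add: algebra_simps)
      ultimately show ?thesis by linarith
    qed
  qed
  finally show ?thesis .
qed

lemma expectation_psi_gossip_step_le:
  fixes opn :: "'v::finite \<Rightarrow> nat option"
  assumes valid: "\<forall>u. opn u \<in> opinions k"
  shows "measure_pmf.expectation (gossip_step opn) (psi k) \<le> beta k opn / real CARD('v)"
proof -
  define N where "N = real CARD('v)"
  have N: "N > 0" unfolding N_def by simp
  let ?m = "expected_opinion_vector opn"
  have "(\<Sum>u\<in>UNIV. \<Sum>w\<in>UNIV. usd_form k (?m u) (?m w)) =
        N^2 * usd_form k (\<lambda>i. alpha opn i * (alpha opn i + 2 * (1 - beta k opn)))
                         (\<lambda>i. alpha opn i * (alpha opn i + 2 * (1 - beta k opn)))"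
    unfolding usd_form_average average_expected_opinion_vector[OF valid] N_def ..
  also have "\<dots> \<le> 0"
    using beta_le_one[OF valid]
    by (intro mult_nonneg_nonpos usd_form_mean_field_nonpos) (auto simp: alpha_def beta_def)
  finally have mean_part: "(\<Sum>u\<in>UNIV. \<Sum>w\<in>UNIV. usd_form k (?m u) (?m w)) \<le> 0" .
  have diagonal_part: "- (\<Sum>u\<in>UNIV. usd_form k (?m u) (?m u)) \<le> N * beta k opn"
    unfolding N_def sum_negf[symmetric]
    using neg_usd_form_expected_opinion_vector_le[OF valid] by (intro sum_bounded_above) auto
  have "measure_pmf.expectation (gossip_step opn) (psi k) \<le> (N * beta k opn) / N^2"
    unfolding expectation_psi_gossip_step N_def[symmetric]
    using mean_part diagonal_part by (intro divide_right_mono) auto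
  then show ?thesis
    using N by (simp add: N_def power2_eq_square)
qed

lemma exp_moment_psi_gossip_step_le:
  fixes opn :: "'v::finite \<Rightarrow> nat option"
  assumes valid: "\<forall>u. opn u \<in> opinions k"
  defines "N \<equiv> real CARD('v)"
  shows "measure_pmf.expectation (gossip_step opn)
           (\<lambda>x. exp (l * (psi k x - measure_pmf.expectation (gossip_step opn) (psi k))))
         \<le> exp (l^2 * (4 / N)^2 * exp (2 * \<bar>l\<bar> * (4 / N)) * (N * beta k opn) / 2)"
proof -
  have differences: "\<bar>psi k x - psi k (x(u := opn u))\<bar> \<le> 4 / N" for x u
    unfolding N_def by (rule psi_bounded_differences)
  have sum_beta: "(\<Sum>u\<in>(UNIV :: 'v set). beta k opn) = N * beta k opn"
    unfolding N_def by simp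
  have "measure_pmf.expectation (gossip_step opn)
           (\<lambda>x. exp (l * (psi k x - measure_pmf.expectation (gossip_step opn) (psi k))))
         \<le> exp (l^2 * (4 / N)^2 * exp (2 * \<bar>l\<bar> * (4 / N)) * (\<Sum>u\<in>(UNIV :: 'v set). beta k opn) / 2)"
    unfolding gossip_step_eq_Pi_pmf
    by (rule exp_moment_Pi_pmf_bounded_differences)
       (use differences prob_vertex_step_changes_le[OF valid] in auto)
  then show ?thesis unfolding sum_beta .
qed

lemma bounded_differences_exponent_le_bernstein:
  fixes l n b :: real
  assumes "n > 0" "b \<ge> 0" "\<bar>l\<bar> * (24 / n) < 3"
  shows "l^2 * (4 / n)^2 * exp (2 * \<bar>l\<bar> * (4 / n)) * (n * b) / 2
         \<le> (l^2 * (400 * b / n) / 2) / (1 - \<bar>l\<bar> * (24 / n) / 3)"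
proof -
  define r where "r = 8 * \<bar>l\<bar> / n"
  define K where "K = l^2 * b / n"
  have "r \<ge> 0" "r < 1" "K \<ge> 0"
    using assms by (simp_all add: r_def K_def field_simps)
  have "exp r * (1 - r) \<le> exp r * exp (- r)"
    using exp_ge_add_one_self[of "- r"] by (intro mult_left_mono) auto
  then have "exp r \<le> 1 / (1 - r)"
    using \<open>r < 1\<close> by (simp add: exp_minus field_simps)
  then have "8 * exp r \<le> 200 / (1 - r)"
    using \<open>r < 1\<close> by (simp add: field_simps)
  then have "K * (8 * exp r) \<le> K * (200 / (1 - r))"
    using \<open>K \<ge> 0\<close> by (rule mult_left_mono)
  moreover have "l^2 * (4 / n)^2 * exp (2 * \<bar>l\<bar> * (4 / n)) * (n * b) / 2 = K * (8 * exp r)"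
    using assms(1) by (simp add: K_def r_def power2_eq_square field_simps)
  moreover have "(l^2 * (400 * b / n) / 2) / (1 - \<bar>l\<bar> * (24 / n) / 3) = K * (200 / (1 - r))"
    by (simp add: K_def r_def field_simps)
  ultimately show ?thesis by simp
qed

theorem mainTheorem8:
  fixes opn :: "'v::finite \<Rightarrow> nat option" and k :: nat
  assumes "\<forall>u. opn u \<in> opinions k"
  defines "n \<equiv> real CARD('v)"
  defines "E \<equiv> measure_pmf.expectation (gossip_step opn) (psi k)"
  shows "E \<le> beta k opn / n \<and>
         bernstein_cond (gossip_step opn) (\<lambda>x. psi k x - E) (24 / n) (400 * beta k opn / n)"
proof
  show "E \<le> beta k opn / n"
    unfolding E_def n_def using assms(1) by (rule expectation_psi_gossip_step_le)
next
  have "n > 0" unfolding n_def by simp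
  show "bernstein_cond (gossip_step opn) (\<lambda>x. psi k x - E) (24 / n) (400 * beta k opn / n)"
    unfolding bernstein_cond_def
  proof (intro allI impI)
    fix l :: real
    assume "\<bar>l\<bar> * (24 / n) < 3"
    have "measure_pmf.expectation (gossip_step opn) (\<lambda>x. exp (l * (psi k x - E)))
          \<le> exp (l^2 * (4 / n)^2 * exp (2 * \<bar>l\<bar> * (4 / n)) * (n * beta k opn) / 2)"
      unfolding E_def n_def using assms(1) by (rule exp_moment_psi_gossip_step_le)
    also have "\<dots> \<le> exp ((l^2 * (400 * beta k opn / n) / 2) / (1 - \<bar>l\<bar> * (24 / n) / 3))"
      using bounded_differences_exponent_le_bernstein[OF \<open>n > 0\<close> beta_nonneg[of k opn] \<open>\<bar>l\<bar> * (24 / n) < 3\<close>]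
      by simp
    finally show "measure_pmf.expectation (gossip_step opn) (\<lambda>x. exp (l * (psi k x - E)))
        \<le> exp ((l^2 * (400 * beta k opn / n) / 2) / (1 - \<bar>l\<bar> * (24 / n) / 3))" .
  qed
qed

end
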